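(* Let $K_4$ be the complete graph on $4$ vertices. Then $K_4\notin\mathfrak{F}$, but $K_4\in\mathcal{P}$.
   Context: Graphs are finite, simple and undirected. $\mathbb{T}=\{z\in\mathbb{C}:|z|=1\}$, $\mathbb{I}=[0,2\pi)$. A $\mathbb{T}$-gain on $G$ is a map $\varphi$ from oriented edges to $\mathbb{T}$ with $\varphi(\overrightarrow{e_{ts}})=\varphi(\overrightarrow{e_{st}})^{-1}$; $A(\Phi)$ for $\Phi=(G,\varphi)$ is the Hermitian matrix with $(s,t)$ entry $\varphi(\overrightarrow{e_{st}})$ if $v_s\sim v_t$, else $0$; $\mathcal{T}_G$ is the set of all $\mathbb{T}$-gain graphs on $G$. $\Re(A)\ge0$ means the real part of every entry of $A$ is nonnegative. The gain of a directed cycle is the product of gains of its oriented edges. A rooted spanning tree $T$ with root $v_r$ induces the tree order ($v_x\le v_y$ iff $v_x$ is on the $T$-path from $v_r$ to $v_y$); $T$ is normal if adjacent vertices of $G$ are always comparable. The suitably oriented graph $\overrightarrow{G_T}$ orients each edge $e_{st}$ with $v_s\le v_t$ as $\overrightarrow{e_{st}}$ if $e_{st}\in E(T)$ and as $\overrightarrow{e_{ts}}$ otherwise; the $m-n+1$ fundamental cycles $C_j$ of $T$ become directed cycles $\overrightarrow{C_j(T)}$. For $r=(c_1,\dots,c_{m-n+1})\in\mathbb{I}^{m-n+1}$, $\mathcal{A}_T(r)=\{(G,\varphi)\in\mathcal{T}_G:\varphi(\overrightarrow{C_j(T)})=e^{ic_j}\ \forall j\}$. $G$ has property GNRP (w.r.t.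 normal spanning tree $T$) if for each $r$ there is $\Phi\in\mathcal{A}_T(r)$ with $\Re(A(\Phi))\ge0$; $\mathcal{P}$ is the class of connected graphs with GNRP. The sum of subgraphs is the subgraph consisting of all edges in at least one of them. A fundamental subgraph of $G$ w.r.t. $T$ is the sum of a maximal collection of fundamental cycles whose sum intersects $T$ in a subtree. A fundamental subgraph built from fundamental cycles $C_1,\dots,C_s$ has DEP if they can be ordered $C_{k_1},\dots,C_{k_s}$ with $|E(C_{k_i})\setminus E(C_{k_1}+\cdots+C_{k_{i-1}})|>1$ for $i=2,\dots,s$. A connected graph has DEP if every fundamental subgraph with respect to a normal spanning tree $T$ has DEP; $\mathfrak{F}$ is the collection of connected graphs with DEP. *)

theory Defs
  imports Complex_Main
begin

definition simple_graph :: "'a set \<Rightarrow> 'a set set \<Rightarrow> bool" where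
  "simple_graph V E \<longleftrightarrow> finite V \<and>
     (\<forall>e\<in>E. \<exists>x y. x \<noteq> y \<and> x \<in> V \<and> y \<in> V \<and> e = {x, y})"

definition is_path :: "'a set set \<Rightarrow> 'a list \<Rightarrow> bool" where
  "is_path F p \<longleftrightarrow> p \<noteq> [] \<and> distinct p \<and>
     (\<forall>i. i + 1 < length p \<longrightarrow> {p ! i, p ! (i + 1)} \<in> F)"

definition path_edges :: "'a list \<Rightarrow> 'a set set" where
  "path_edges p = {{p ! i, p ! (i + 1)} | i. i + 1 < length p}"

definition connected_on :: "'a set \<Rightarrow> 'a set set \<Rightarrow> bool" where
  "connected_on V F \<longleftrightarrow> V \<noteq> {} \<and>
     (\<forall>x\<in>V. \<forall>y\<in>V. \<exists>p. is_path F p \<and> hd p = x \<and> last p = y \<and> set p \<subseteq> V)"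

definition acyclic_edges :: "'a set set \<Rightarrow> bool" where
  "acyclic_edges F \<longleftrightarrow>
     \<not> (\<exists>p. is_path F p \<and> 3 \<le> length p \<and> {last p, hd p} \<in> F)"

definition spanning_tree :: "'a set \<Rightarrow> 'a set set \<Rightarrow> 'a set set \<Rightarrow> bool" where
  "spanning_tree V E ET \<longleftrightarrow> ET \<subseteq> E \<and> connected_on V ET \<and> acyclic_edges ET"

definition tree_le :: "'a set set \<Rightarrow> 'a \<Rightarrow> 'a \<Rightarrow> 'a \<Rightarrow> bool" where
  "tree_le ET r x y \<longleftrightarrow>
     (\<exists>p. is_path ET p \<and> hd p = r \<and> last p = y \<and> x \<in> set p)"

definition normal_spanning_tree :: "'a set \<Rightarrow> 'a set set \<Rightarrow> 'a set set \<Rightarrow> 'a \<Rightarrow> bool" where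
  "normal_spanning_tree V E ET r \<longleftrightarrow> spanning_tree V E ET \<and> r \<in> V \<and>
     (\<forall>x y. {x, y} \<in> E \<longrightarrow> tree_le ET r x y \<or> tree_le ET r y x)"

definition fund_cycle :: "'a set set \<Rightarrow> 'a set \<Rightarrow> 'a set set" where
  "fund_cycle ET e = (THE C. \<exists>x y p. e = {x, y} \<and> is_path ET p \<and> hd p = x \<and> last p = y
                               \<and> C = insert e (path_edges p))"

definition is_subtree :: "'a set set \<Rightarrow> bool" where
  "is_subtree F \<longleftrightarrow> connected_on (\<Union>F) F \<and> acyclic_edges F"

definition meets_in_subtree :: "'a set set \<Rightarrow> 'a set set \<Rightarrow> 'a set set \<Rightarrow> bool" where
  "meets_in_subtree E ET S \<longleftrightarrow> S \<subseteq> E - ET \<and>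
     is_subtree ((\<Union>e\<in>S. fund_cycle ET e) \<inter> ET)"

text \<open>S indexes a maximal such collection, i.e. the fundamental subgraph
  (\<Union>e\<in>S. fund_cycle ET e).\<close>

definition fundamental_collection :: "'a set set \<Rightarrow> 'a set set \<Rightarrow> 'a set set \<Rightarrow> bool" where
  "fundamental_collection E ET S \<longleftrightarrow> meets_in_subtree E ET S \<and>
     (\<forall>S'. S \<subset> S' \<longrightarrow> \<not> meets_in_subtree E ET S')"

definition DEP_collection :: "'a set set \<Rightarrow> 'a set set \<Rightarrow> bool" where
  "DEP_collection ET S \<longleftrightarrow> (\<exists>ks. distinct ks \<and> set ks = S \<and>
     (\<forall>i. 1 \<le> i \<and> i < length ks \<longrightarrow>
        card (fund_cycle ET (ks ! i) - (\<Union>j<i. fund_cycle ET (ks ! j))) > 1))"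

text \<open>Membership in the class \<open>\<mathfrak>F\<close>.\<close>

definition has_DEP :: "'a set \<Rightarrow> 'a set set \<Rightarrow> bool" where
  "has_DEP V E \<longleftrightarrow> simple_graph V E \<and> connected_on V E \<and>
     (\<forall>ET r S. normal_spanning_tree V E ET r \<and> fundamental_collection E ET S
        \<longrightarrow> DEP_collection ET S)"

definition T_gain :: "'a set set \<Rightarrow> ('a \<Rightarrow> 'a \<Rightarrow> complex) \<Rightarrow> bool" where
  "T_gain E \<phi> \<longleftrightarrow> (\<forall>s t. {s, t} \<in> E \<longrightarrow> cmod (\<phi> s t) = 1 \<and> \<phi> t s = inverse (\<phi> s t))"

definition gain_matrix :: "'a set set \<Rightarrow> ('a \<Rightarrow> 'a \<Rightarrow> complex) \<Rightarrow> 'a \<Rightarrow> 'a \<Rightarrow> complex" where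
  "gain_matrix E \<phi> s t = (if {s, t} \<in> E then \<phi> s t else 0)"

definition re_nonneg :: "'a set \<Rightarrow> 'a set set \<Rightarrow> ('a \<Rightarrow> 'a \<Rightarrow> complex) \<Rightarrow> bool" where
  "re_nonneg V E \<phi> \<longleftrightarrow> (\<forall>s\<in>V. \<forall>t\<in>V. Re (gain_matrix E \<phi> s t) \<ge> 0)"

text \<open>Gain of the directed fundamental cycle of the non-tree edge e in the
  suitably oriented graph: for e = {x,y} with x \<le> y, tree edges are oriented
  downwards along the T-path from x to y and e is oriented from y to x.\<close>

definition fund_cycle_gain ::
  "'a set set \<Rightarrow> 'a \<Rightarrow> ('a \<Rightarrow> 'a \<Rightarrow> complex) \<Rightarrow> 'a set \<Rightarrow> complex" where
  "fund_cycle_gain ET r \<phi> e = (THE g. \<exists>x y p. e = {x, y} \<and> tree_le ET r x y \<and>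
      is_path ET p \<and> hd p = x \<and> last p = y \<and>
      g = (\<Prod>i<length p - 1. \<phi> (p ! i) (p ! (i + 1))) * \<phi> y x)"

text \<open>GNRP with respect to the rooted normal spanning tree (ET, r); the
  parameter r \<in> \<open>\<bbbI>\<close>^(m-n+1) is given as a function c on the non-tree edges.\<close>

definition GNRP_wrt :: "'a set \<Rightarrow> 'a set set \<Rightarrow> 'a set set \<Rightarrow> 'a \<Rightarrow> bool" where
  "GNRP_wrt V E ET r \<longleftrightarrow>
     (\<forall>c :: 'a set \<Rightarrow> real. (\<forall>e\<in>E - ET. 0 \<le> c e \<and> c e < 2 * pi) \<longrightarrow>
        (\<exists>\<phi>. T_gain E \<phi> \<and>
             (\<forall>e\<in>E - ET. fund_cycle_gain ET r \<phi> e = exp (\<i> * complex_of_real (c e))) \<and>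
             re_nonneg V E \<phi>))"

text \<open>Membership in the class \<open>\<P>\<close>.\<close>

definition has_GNRP :: "'a set \<Rightarrow> 'a set set \<Rightarrow> bool" where
  "has_GNRP V E \<longleftrightarrow> simple_graph V E \<and> connected_on V E \<and>
     (\<forall>ET r. normal_spanning_tree V E ET r \<longrightarrow> GNRP_wrt V E ET r)"

definition complete_edges :: "'a set \<Rightarrow> 'a set set" where
  "complete_edges V = {e. \<exists>x\<in>V. \<exists>y\<in>V. x \<noteq> y \<and> e = {x, y}}"

definition K4_V :: "nat set" where "K4_V = {0, 1, 2, 3}"

end

theory Submission
  imports Defs
begin

(*
  Every normal spanning tree of K4 is a path r-b-c-d starting at the root: the tree order must
  be total, so the tree is a Hamiltonian path.  Its three fundamental cycles have 3, 3 and 4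
  edges, all among the 6 edges of K4.  In any ordering of them, the second and third cycle would
  each have to contribute at least two new edges, giving 3 + 2 + 2 > 6 edges; so K4 lacks DEP.

  For GNRP, give the tree edges angles k1 pi/2, k2 pi/2, k3 pi/2 with k_i in {-1, 0, 1}, which
  have nonnegative cosine, and give each non-tree edge the angle that its fundamental cycle
  forces.  These forced angles are the prescribed cycle angles shifted by (k1 + k2) pi/2,
  (k2 + k3) pi/2 and (k1 + k2 + k3) pi/2, and a finite check over the quadrants of the
  prescribed angles shows that the k_i can be chosen so that all of them have nonnegative cosine.
*)

section \<open>Paths in an edge set\<close>

lemma is_path_iff_successively:
  "is_path F p \<longleftrightarrow> p \<noteq> [] \<and> distinct p \<and> successively (\<lambda>x y. {x, y} \<in> F) p"
  unfolding is_path_def successively_conv_nth by auto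

lemma not_is_path_Nil [simp]: "\<not> is_path F []"
  by (simp add: is_path_def)

lemma is_path_singleton [simp]: "is_path F [x]"
  by (simp add: is_path_def)

lemma is_path_Cons_Cons [simp]:
  "is_path F (x # y # q) \<longleftrightarrow> {x, y} \<in> F \<and> x \<notin> set (y # q) \<and> is_path F (y # q)"
  by (auto simp: is_path_iff_successively)

lemma is_path_rev [simp]: "is_path F (rev p) \<longleftrightarrow> is_path F p"
proof -
  have "(\<lambda>x y. {y, x} \<in> F) = (\<lambda>x y. {x, y} \<in> F)"
    by (simp add: insert_commute)
  then show ?thesis
    by (simp only: is_path_iff_successively successively_rev distinct_rev rev_is_Nil_conv)
qed

lemma is_path_appendD:
  assumes "is_path F (xs @ ys)"
  shows "xs \<noteq> [] \<Longrightarrow> is_path F xs" and "ys \<noteq> [] \<Longrightarrow> is_path F ys"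
  using assms by (auto simp: is_path_iff_successively successively_append_iff)

lemma is_path_take: "is_path F p \<Longrightarrow> 0 < n \<Longrightarrow> is_path F (take n p)"
  using is_path_appendD(1)[of F "take n p" "drop n p"] by (cases p) auto

lemma is_path_drop: "is_path F p \<Longrightarrow> n < length p \<Longrightarrow> is_path F (drop n p)"
  using is_path_appendD(2)[of F "take n p" "drop n p"] by simp

lemma take_Suc_last: "j < length p \<Longrightarrow> last (take (Suc j) p) = p ! j"
  by (simp add: take_Suc_conv_app_nth)

lemma is_path_segment:
  assumes "is_path F p" "i \<le> j" "j < length p"
  defines "q \<equiv> drop i (take (Suc j) p)"
  shows "is_path F q" "hd q = p ! i" "last q = p ! j" "length q = Suc j - i"
proof -
  have "is_path F (take (Suc j) p)"
    using assms(1) by (simp add: is_path_take)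
  then show "is_path F q"
    using assms(2,3) by (simp add: q_def is_path_drop)
  show "hd q = p ! i" "last q = p ! j" "length q = Suc j - i"
    using assms(2,3) by (simp_all add: q_def hd_drop_conv_nth take_Suc_last)
qed

lemma is_path_hd_eq_last: "is_path F p \<Longrightarrow> hd p = last p \<Longrightarrow> p = [hd p]"
  by (cases p) (auto simp: is_path_def split: if_splits)

lemma is_path_set_subset: "is_path F p \<Longrightarrow> set p \<subseteq> insert (hd p) (\<Union>F)"
proof (induction p rule: induct_list012)
  case (3 x y q)
  then show ?case by auto
qed auto

lemma path_edges_singleton [simp]: "path_edges [x] = {}"
  by (simp add: path_edges_def)

lemma path_edges_conv_image: "path_edges p = (\<lambda>i. {p ! i, p ! Suc i}) ` {..<length p - 1}"
  unfolding path_edges_def by auto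

lemma path_edges_Cons_Cons [simp]:
  "path_edges (x # y # q) = insert {x, y} (path_edges (y # q))"
  unfolding path_edges_conv_image by (simp add: lessThan_Suc_eq_insert_0 image_image)

lemma path_edges_rev [simp]: "path_edges (rev p) = path_edges p"
proof -
  have "{{p ! i, p ! (i + 1)} | i. i + 1 < length p} \<subseteq> path_edges (rev p)" for p :: "'a list"
  proof clarify
    fix i assume i: "i + 1 < length p"
    define j where "j = length p - 2 - i"
    have "rev p ! j = p ! (i + 1)" "rev p ! (j + 1) = p ! i"
      using i by (simp_all add: rev_nth j_def Suc_diff_Suc)
    then show "{p ! i, p ! (i + 1)} \<in> path_edges (rev p)"
      unfolding path_edges_def using i by (auto simp: j_def insert_commute intro!: exI[of _ j])
  qed
  from this[of p] this[of "rev p"] show ?thesis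
    by (auto simp: path_edges_def)
qed

lemma path_edges_subset: "is_path F p \<Longrightarrow> path_edges p \<subseteq> F"
  by (auto simp: is_path_def path_edges_def)

lemma is_path_edges: "distinct p \<Longrightarrow> p \<noteq> [] \<Longrightarrow> is_path (path_edges p) p"
  unfolding is_path_def path_edges_def by blast

lemma path_edges_neighbour:
  assumes "distinct p" "i < length p" "{p ! i, u} \<in> path_edges p"
  shows "(0 < i \<and> u = p ! (i - 1)) \<or> (Suc i < length p \<and> u = p ! Suc i)"
proof -
  from assms(3) obtain j where j: "j < length p - 1" "{p ! i, u} = {p ! j, p ! Suc j}"
    by (auto simp: path_edges_conv_image)
  then have "(p ! i = p ! j \<and> u = p ! Suc j) \<or> (p ! i = p ! Suc j \<and> u = p ! j)"
    by (auto simp: doubleton_eq_iff)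
  then show ?thesis
    using assms(1,2) j(1) by (auto simp: nth_eq_iff_index_eq)
qed

lemma Union_path_edges: "2 \<le> length p \<Longrightarrow> \<Union>(path_edges p) = set p"
proof (induction p rule: induct_list012)
  case (3 x y q)
  show ?case
  proof (cases q)
    case Nil
    then show ?thesis
      by simp
  next
    case (Cons z r)
    then have "\<Union>(path_edges (y # q)) = set (y # q)"
      using "3.IH" by simp
    then show ?thesis
      by auto
  qed
qed simp_all

lemma path_edges_subset_complete_edges:
  assumes "distinct p"
  shows "path_edges p \<subseteq> complete_edges (set p)"
proof
  fix e assume "e \<in> path_edges p"
  then obtain i where "i < length p - 1" "e = {p ! i, p ! Suc i}"
    by (auto simp: path_edges_conv_image)
  moreover have "p ! i \<in> set p" "p ! Suc i \<in> set p" "p ! i \<noteq> p ! Suc i"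
    using assms calculation(1) by (simp_all add: nth_eq_iff_index_eq)
  ultimately show "e \<in> complete_edges (set p)"
    unfolding complete_edges_def by blast
qed

section \<open>Acyclic edge sets\<close>

lemma not_acyclic_two_paths:
  assumes p: "is_path F (x # A @ [z])" and q: "is_path F (x # B @ [z])"
    and disj: "set A \<inter> set B = {}" and ne: "A \<noteq> B"
  shows "\<not> acyclic_edges F"
proof -
  define L where "L = (x # A @ [z]) @ rev B"
  have "is_path F (B @ [z])"
    using q is_path_appendD(2)[of F "[x]"] by simp
  then have "is_path F (z # rev B)"
    using is_path_rev[of F "B @ [z]"] by simp
  then have "successively (\<lambda>x y. {x, y} \<in> F) (rev B)" "B \<noteq> [] \<Longrightarrow> {z, hd (rev B)} \<in> F"
    by (cases "rev B"; simp add: is_path_iff_successively)+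
  then have "successively (\<lambda>x y. {x, y} \<in> F) L"
    using p unfolding L_def is_path_iff_successively successively_append_iff by auto
  moreover have "distinct L"
    using p q disj unfolding L_def is_path_iff_successively by auto
  ultimately have "is_path F L"
    by (simp add: L_def is_path_iff_successively)
  moreover have "3 \<le> length L"
    using ne disj by (cases A; cases B) (auto simp: L_def)
  moreover have "{last L, hd L} \<in> F"
    using q by (cases B) (auto simp: L_def insert_commute)
  ultimately show ?thesis
    unfolding acyclic_edges_def by blast
qed

lemma acyclic_path_unique:
  assumes "acyclic_edges F" "is_path F p" "is_path F q" "hd p = hd q" "last p = last q"
  shows "p = q"
  using assms(2-)
proof (induction p arbitrary: q)
  case (Cons x p')
  then obtain q' where q: "q = x # q'"
    by (cases q) auto
  consider "p' = []" | "q' = []" | "p' \<noteq> []" "q' \<noteq> []" "hd p' = hd q'"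
    | "p' \<noteq> []" "q' \<noteq> []" "hd p' \<noteq> hd q'"
    by blast
  then show ?case
  proof cases
    case 1
    then show ?thesis
      using Cons.prems is_path_hd_eq_last[of F q] by simp
  next
    case 2
    then show ?thesis
      using Cons.prems q is_path_hd_eq_last[of F "x # p'"] by simp
  next
    case 3
    have "is_path F p'" "is_path F q'"
      using 3 Cons.prems(1,2) q is_path_appendD(2)[of F "[x]"] by simp_all
    moreover have "last p' = last q'"
      using 3 Cons.prems(4) q by simp
    ultimately show ?thesis
      using 3 Cons.IH q by blast
  next
    case 4
    have "\<exists>z\<in>set p'. z \<in> set q'"
      using 4 Cons.prems(4) q by (metis last.simps last_in_set)
    then obtain A z P where p': "p' = A @ z # P" "z \<in> set q'" "\<forall>a\<in>set A. a \<notin> set q'"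
      by (auto simp: split_list_first_prop_iff)
    obtain B Q where q': "q' = B @ z # Q"
      using p'(2) split_list by metis
    have "is_path F (x # A @ [z])"
      using Cons.prems(1) p' is_path_appendD(1)[of F "x # A @ [z]" P] by simp
    moreover have "is_path F (x # B @ [z])"
      using Cons.prems(2) q q' is_path_appendD(1)[of F "x # B @ [z]" Q] by simp
    moreover have disj: "set A \<inter> set B = {}"
      using p'(3) q' by auto
    moreover have "A \<noteq> B"
    proof
      assume "A = B"
      then have "A = []" "B = []"
        using disj by simp_all
      then show False
        using 4 p'(1) q' by simp
    qed
    ultimately have "\<not> acyclic_edges F"
      by (rule not_acyclic_two_paths)
    then show ?thesis
      using assms(1) by contradiction
  qed
qed simp

lemma cycle_two_neighbours:
  assumes L: "is_path F L" "3 \<le> length L" "{last L, hd L} \<in> F" and v: "v \<in> set L"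
  obtains u w where "u \<in> set L" "w \<in> set L" "u \<noteq> w" "{v, u} \<in> F" "{v, w} \<in> F"
proof -
  define n where "n = length L"
  obtain i where i: "i < n" "v = L ! i"
    using v by (auto simp: in_set_conv_nth n_def)
  have adj: "{L ! k, L ! Suc k} \<in> F" if "Suc k < n" for k
    using L(1) that by (simp add: is_path_def n_def)
  have "L \<noteq> []"
    using L(1) by auto
  then have last: "last L = L ! (n - 1)" and hd: "hd L = L ! 0"
    by (simp_all add: last_conv_nth hd_conv_nth n_def)
  have dist: "L ! j \<noteq> L ! k" if "j < n" "k < n" "j \<noteq> k" for j k
    using L(1) that by (simp add: is_path_def nth_eq_iff_index_eq n_def)
  have "\<exists>j k. j < n \<and> k < n \<and> j \<noteq> k \<and> {v, L ! j} \<in> F \<and> {v, L ! k} \<in> F"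
  proof (cases "i = 0 \<or> i = n - 1")
    case True
    then show ?thesis
    proof
      assume "i = 0"
      then show ?thesis
        using adj[of 0] L(2,3) i last hd by (intro exI[of _ 1] exI[of _ "n - 1"]) (auto simp: n_def insert_commute)
    next
      assume "i = n - 1"
      then show ?thesis
        using adj[of "n - 2"] L(2,3) i last hd
        by (intro exI[of _ "n - 2"] exI[of _ 0]) (auto simp: n_def insert_commute numeral_2_eq_2 Suc_diff_Suc)
    qed
  next
    case False
    then show ?thesis
      using adj[of i] adj[of "i - 1"] i
      by (intro exI[of _ "i - 1"] exI[of _ "Suc i"]) (auto simp: insert_commute)
  qed
  then show ?thesis
    using that dist by (metis n_def nth_mem)
qed

(* The vertex of the cycle that lies furthest along p would need two distinct cycle neighbours,
   but its only neighbour on p that is not further along is its predecessor. *)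
lemma acyclic_path_edges:
  assumes "distinct p"
  shows "acyclic_edges (path_edges p)"
  unfolding acyclic_edges_def
proof (rule notI, elim exE conjE)
  fix L assume L: "is_path (path_edges p) L" "3 \<le> length L" "{last L, hd L} \<in> path_edges p"
  have "\<Union>(path_edges p) \<subseteq> set p"
    by (auto simp: path_edges_conv_image)
  moreover have "hd L \<in> \<Union>(path_edges p)"
    using L(3) by blast
  ultimately have "set L \<subseteq> set p"
    using is_path_set_subset[OF L(1)] by blast
  define I where "I = {j. j < length p \<and> p ! j \<in> set L}"
  define i where "i = Max I"
  have "hd L \<in> set L"
    using L(1) by (cases L) auto
  moreover obtain k where "k < length p" "p ! k = hd L"
    using \<open>set L \<subseteq> set p\<close> \<open>hd L \<in> set L\<close> by (metis in_set_conv_nth subsetD)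
  ultimately have "I \<noteq> {}"
    by (auto simp: I_def)
  moreover have "finite I"
    by (simp add: I_def)
  ultimately have "i \<in> I" and above: "\<And>j. j \<in> I \<Longrightarrow> j \<le> i"
    by (simp_all add: i_def)
  then have i_in: "i < length p" "p ! i \<in> set L"
    by (simp_all add: I_def)
  have succ_out: "Suc i < length p \<Longrightarrow> p ! Suc i \<notin> set L"
    using above[of "Suc i"] by (auto simp: I_def)
  obtain u w where uw: "u \<in> set L" "w \<in> set L" "u \<noteq> w"
    "{p ! i, u} \<in> path_edges p" "{p ! i, w} \<in> path_edges p"
    using cycle_two_neighbours[OF L i_in(2)] by blast
  have "x = p ! (i - 1)" if "x \<in> set L" "{p ! i, x} \<in> path_edges p" for x
    using path_edges_neighbour[OF assms i_in(1) that(2)] succ_out that(1) by auto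
  then show False
    using uw by metis
qed

lemma acyclic_edges_eq_path_edges:
  assumes ac: "acyclic_edges F" and p: "is_path F p" and sub: "F \<subseteq> complete_edges (set p)"
  shows "F = path_edges p"
proof
  show "path_edges p \<subseteq> F"
    using p by (rule path_edges_subset)
  show "F \<subseteq> path_edges p"
  proof
    fix e assume "e \<in> F"
    then obtain x y where "x \<in> set p" "y \<in> set p" "x \<noteq> y" "e = {x, y}"
      using sub unfolding complete_edges_def by blast
    then obtain a b where ab: "a < length p" "b < length p" "a \<noteq> b" "e = {p ! a, p ! b}"
      by (metis in_set_conv_nth)
    define i j where "i = min a b" and "j = max a b"
    have ij: "i < j" "j < length p" "e = {p ! i, p ! j}"
      using ab by (auto simp: i_def j_def min_def max_def insert_commute)
    have "j = Suc i"
    proof (rule ccontr)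
      assume "j \<noteq> Suc i"
      then have "3 \<le> Suc j - i"
        using ij(1) by linarith
      then show False
        using ac is_path_segment[OF p less_imp_le[OF ij(1)] ij(2)] \<open>e \<in> F\<close> ij(3)
        unfolding acyclic_edges_def by (metis insert_commute)
    qed
    then show "e \<in> path_edges p"
      using ij by (auto simp: path_edges_def)
  qed
qed

section \<open>A path as a rooted tree\<close>

lemma connected_on_path_edges:
  assumes "distinct p" "p \<noteq> []"
  shows "connected_on (set p) (path_edges p)"
  unfolding connected_on_def
proof (intro conjI ballI)
  show "set p \<noteq> {}"
    using assms(2) by simp
  have p: "is_path (path_edges p) p"
    using assms by (rule is_path_edges)
  have segment:
    "\<exists>q. is_path (path_edges p) q \<and> hd q = p ! i \<and> last q = p ! j \<and> set q \<subseteq> set p"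
    if "i \<le> j" "j < length p" for i j
  proof -
    have "set (drop i (take (Suc j) p)) \<subseteq> set p"
      by (meson set_drop_subset set_take_subset subset_trans)
    then show ?thesis
      using is_path_segment[OF p that] by blast
  qed
  fix x y assume "x \<in> set p" "y \<in> set p"
  then obtain i j where ij: "i < length p" "j < length p" "x = p ! i" "y = p ! j"
    by (metis in_set_conv_nth)
  show "\<exists>q. is_path (path_edges p) q \<and> hd q = x \<and> last q = y \<and> set q \<subseteq> set p"
  proof (cases "i \<le> j")
    case True
    then show ?thesis
      using segment ij by blast
  next
    case False
    then obtain q where "is_path (path_edges p) q" "hd q = y" "last q = x" "set q \<subseteq> set p"
      using segment[of j i] ij by auto
    moreover have "q \<noteq> []"
      using \<open>is_path (path_edges p) q\<close> by auto
    ultimately show ?thesis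
      by (intro exI[of _ "rev q"]) (simp add: hd_rev last_rev)
  qed
qed

lemma is_subtree_path_edges:
  assumes "distinct p" "2 \<le> length p"
  shows "is_subtree (path_edges p)"
proof -
  have "connected_on (set p) (path_edges p)"
    using assms by (intro connected_on_path_edges) auto
  then show ?thesis
    unfolding is_subtree_def Union_path_edges[OF assms(2)]
    using acyclic_path_edges[OF assms(1)] by blast
qed

lemma tree_le_path_edges_iff:
  assumes "distinct p" "i < length p" "j < length p"
  shows "tree_le (path_edges p) (hd p) (p ! i) (p ! j) \<longleftrightarrow> i \<le> j"
proof -
  have p: "is_path (path_edges p) p"
    using assms by (auto intro: is_path_edges)
  then have pj: "is_path (path_edges p) (take (Suc j) p)"
    by (simp add: is_path_take)
  show ?thesis
  proof
    assume "tree_le (path_edges p) (hd p) (p ! i) (p ! j)"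
    then obtain q where q: "is_path (path_edges p) q" "hd q = hd p" "last q = p ! j" "p ! i \<in> set q"
      unfolding tree_le_def by blast
    have "q = take (Suc j) p"
      using acyclic_path_unique[OF acyclic_path_edges[OF assms(1)] q(1) pj] q(2,3) assms(3)
      by (simp add: take_Suc_last)
    then obtain k where "k < Suc j" "p ! k = p ! i"
      using q(4) assms(3) by (auto simp: in_set_conv_nth)
    then show "i \<le> j"
      using assms by (simp add: nth_eq_iff_index_eq)
  next
    assume "i \<le> j"
    then have "p ! i \<in> set (take (Suc j) p)"
      using assms(2,3) by (auto simp: in_set_conv_nth intro!: exI[of _ i])
    then show "tree_le (path_edges p) (hd p) (p ! i) (p ! j)"
      unfolding tree_le_def using pj assms(3) take_Suc_last
      by (intro exI[of _ "take (Suc j) p"]) simp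
  qed
qed

lemma normal_spanning_tree_path_edges:
  assumes "distinct p" "p \<noteq> []"
  shows "normal_spanning_tree (set p) (complete_edges (set p)) (path_edges p) (hd p)"
  unfolding normal_spanning_tree_def spanning_tree_def
proof (intro conjI allI impI)
  fix x y assume "{x, y} \<in> complete_edges (set p)"
  then obtain i j where "i < length p" "j < length p" "x = p ! i" "y = p ! j"
    by (auto simp: complete_edges_def doubleton_eq_iff in_set_conv_nth)
  then show "tree_le (path_edges p) (hd p) x y \<or> tree_le (path_edges p) (hd p) y x"
    using tree_le_path_edges_iff[OF assms(1)] by (meson nat_le_linear)
qed (use assms in \<open>simp_all add: path_edges_subset_complete_edges connected_on_path_edges
  acyclic_path_edges\<close>)

section \<open>Normal spanning trees of complete graphs\<close>

lemma simple_graph_complete_edges: "finite V \<Longrightarrow> simple_graph V (complete_edges V)"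
  unfolding simple_graph_def complete_edges_def by blast

lemma connected_on_complete_edges:
  assumes "V \<noteq> {}"
  shows "connected_on V (complete_edges V)"
  unfolding connected_on_def
proof (intro conjI ballI)
  fix x y assume "x \<in> V" "y \<in> V"
  show "\<exists>p. is_path (complete_edges V) p \<and> hd p = x \<and> last p = y \<and> set p \<subseteq> V"
  proof (cases "x = y")
    case True
    then show ?thesis
      using \<open>x \<in> V\<close> by (intro exI[of _ "[x]"]) simp
  next
    case False
    then have "{x, y} \<in> complete_edges V"
      using \<open>x \<in> V\<close> \<open>y \<in> V\<close> unfolding complete_edges_def by blast
    then show ?thesis
      using False \<open>x \<in> V\<close> \<open>y \<in> V\<close> by (intro exI[of _ "[x, y]"]) simp
  qed
qed (rule assms)

lemma complete_edges_four:
  "distinct [a, b, c, d] \<Longrightarrow>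
    complete_edges {a, b, c, d} = {{a, b}, {a, c}, {a, d}, {b, c}, {b, d}, {c, d}}"
  unfolding complete_edges_def by (auto simp: insert_commute)

lemma tree_le_last_in_path:
  assumes "acyclic_edges ET" "is_path ET p" "hd p = r" "tree_le ET r x (last p)"
  shows "x \<in> set p"
  using assms acyclic_path_unique unfolding tree_le_def by metis

lemma tree_le_last_of_longest:
  assumes "acyclic_edges ET" "is_path ET p" "hd p = r"
    and longest: "\<And>q. is_path ET q \<Longrightarrow> hd q = r \<Longrightarrow> length q \<le> length p"
    and "tree_le ET r (last p) v"
  shows "v = last p"
proof -
  obtain q where q: "is_path ET q" "hd q = r" "last q = v" "last p \<in> set q"
    using assms(5) unfolding tree_le_def by blast
  then obtain q1 q2 where q12: "q = q1 @ last p # q2"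
    by (meson split_list)
  have "is_path ET (q1 @ [last p])"
    using q(1) q12 is_path_appendD(1)[of ET "q1 @ [last p]" q2] by simp
  moreover have "hd (q1 @ [last p]) = r"
    using q(2) q12 by (cases q1) auto
  ultimately have "q1 @ [last p] = p"
    using acyclic_path_unique[OF assms(1) _ assms(2)] assms(3) by simp
  then have "length p = Suc (length q1)"
    by (metis length_append_singleton)
  then have "length q = length p + length q2"
    using q12 by simp
  then have "q2 = []"
    using longest[OF q(1,2)] by simp
  then show ?thesis
    using q(3) q12 by simp
qed

lemma normal_spanning_tree_complete_edges_spanning_path:
  assumes nst: "normal_spanning_tree V (complete_edges V) ET r" and "finite V"
  obtains p where "is_path ET p" "hd p = r" "set p = V"
proof -
  have sub: "ET \<subseteq> complete_edges V" and ac: "acyclic_edges ET" and "r \<in> V"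
    and normal: "\<And>x y. {x, y} \<in> complete_edges V \<Longrightarrow> tree_le ET r x y \<or> tree_le ET r y x"
    using nst unfolding normal_spanning_tree_def spanning_tree_def by auto
  have "\<Union>ET \<subseteq> V"
    using sub by (auto simp: complete_edges_def)
  then have in_V: "set q \<subseteq> V" if "is_path ET q" "hd q = r" for q
    using is_path_set_subset[OF that(1)] that(2) \<open>r \<in> V\<close> by blast
  have bounded: "length q \<le> card V" if "is_path ET q" "hd q = r" for q
    using card_mono[OF \<open>finite V\<close> in_V[OF that]] that(1) distinct_card[of q]
    by (simp add: is_path_def)
  obtain p where p: "is_path ET p" "hd p = r"
    and longest: "\<And>q. is_path ET q \<Longrightarrow> hd q = r \<Longrightarrow> length q \<le> length p"
    using Lattices_Big.ex_has_greatest_nat[of "\<lambda>q. is_path ET q \<and> hd q = r" "[r]" length "Suc (card V)"]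
      bounded by fastforce
  have "V \<subseteq> set p"
  proof
    fix v assume "v \<in> V"
    have "last p \<in> V"
      using in_V[OF p] p(1) by (cases p) auto
    show "v \<in> set p"
    proof (cases "v = last p")
      case False
      then have "tree_le ET r v (last p) \<or> tree_le ET r (last p) v"
        using normal \<open>v \<in> V\<close> \<open>last p \<in> V\<close> by (auto simp: complete_edges_def)
      then show ?thesis
        using tree_le_last_in_path[OF ac p] tree_le_last_of_longest[OF ac p longest] False by blast
    qed (use p(1) in \<open>cases p; simp\<close>)
  qed
  then show ?thesis
    using that p in_V[OF p] by blast
qed

lemma normal_spanning_tree_complete_edges:
  assumes nst: "normal_spanning_tree V (complete_edges V) ET r" and "finite V"
  obtains p where "distinct p" "hd p = r" "set p = V" "ET = path_edges p"
proof -
  obtain p where p: "is_path ET p" "hd p = r" "set p = V"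
    by (rule normal_spanning_tree_complete_edges_spanning_path[OF assms])
  moreover have "ET = path_edges p"
  proof (rule acyclic_edges_eq_path_edges)
    show "acyclic_edges ET" "ET \<subseteq> complete_edges (set p)"
      using nst p(3) unfolding normal_spanning_tree_def spanning_tree_def by auto
  qed (rule p(1))
  moreover have "distinct p"
    using p(1) by (simp add: is_path_def)
  ultimately show ?thesis
    using that by blast
qed

section \<open>Fundamental cycles and their gains\<close>

lemma fund_cycle_eq:
  assumes ac: "acyclic_edges F" and p: "is_path F p" "hd p = x" "last p = y"
  shows "fund_cycle F {x, y} = insert {x, y} (path_edges p)"
  unfolding fund_cycle_def
proof (rule the_equality)
  fix C
  assume "\<exists>x' y' p'. {x, y} = {x', y'} \<and> is_path F p' \<and> hd p' = x' \<and> last p' = y'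
            \<and> C = insert {x, y} (path_edges p')"
  then obtain x' y' p' where C: "{x, y} = {x', y'}" "is_path F p'" "hd p' = x'" "last p' = y'"
      "C = insert {x, y} (path_edges p')"
    by blast
  have "p' = p \<or> p' = rev p"
  proof (cases "x' = x")
    case True
    then have "hd p' = hd p" "last p' = last p"
      using C(1,3,4) p(2,3) by (auto simp: doubleton_eq_iff)
    then show ?thesis
      using acyclic_path_unique[OF ac C(2) p(1)] by blast
  next
    case False
    then have "hd p' = hd (rev p)" "last p' = last (rev p)"
      using C(1,3,4) p by (auto simp: doubleton_eq_iff hd_rev last_rev)
    moreover have "is_path F (rev p)"
      using p(1) by simp
    ultimately show ?thesis
      using acyclic_path_unique[OF ac C(2)] by blast
  qed
  then show "C = insert {x, y} (path_edges p)"
    using C(5) by auto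
qed (use p in blast)

lemma fundamental_collection_non_tree_edges:
  assumes "is_subtree ET" "ET \<subseteq> (\<Union>e\<in>E - ET. fund_cycle ET e)"
  shows "fundamental_collection E ET (E - ET)"
proof -
  have "(\<Union>e\<in>E - ET. fund_cycle ET e) \<inter> ET = ET"
    using assms(2) by blast
  then show ?thesis
    using assms(1) by (auto simp: fundamental_collection_def meets_in_subtree_def)
qed

lemma DEP_collection_card_Union:
  assumes "DEP_collection ET S" "S \<noteq> {}"
    and fin: "\<And>e. e \<in> S \<Longrightarrow> finite (fund_cycle ET e)"
    and size: "\<And>e. e \<in> S \<Longrightarrow> m \<le> card (fund_cycle ET e)"
  shows "m + 2 * (card S - 1) \<le> card (\<Union>e\<in>S. fund_cycle ET e)"
proof -
  let ?C = "fund_cycle ET"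
  obtain ks where ks: "distinct ks" "set ks = S"
    and new: "\<And>i. 1 \<le> i \<Longrightarrow> i < length ks \<Longrightarrow> 1 < card (?C (ks ! i) - (\<Union>j<i. ?C (ks ! j)))"
    using assms(1) unfolding DEP_collection_def by blast
  define U where "U n = (\<Union>j<n. ?C (ks ! j))" for n
  have fin_U: "finite (U n)" if "n \<le> length ks" for n
    using that fin ks(2) by (auto simp: U_def)
  have "m + 2 * (n - 1) \<le> card (U n)" if "1 \<le> n" "n \<le> length ks" for n
    using that
  proof (induction n)
    case (Suc n)
    have "ks ! n \<in> S"
      using Suc.prems ks(2) by auto
    show ?case
    proof (cases "n = 0")
      case True
      then show ?thesis
        using size[OF \<open>ks ! n \<in> S\<close>] by (simp add: U_def lessThan_Suc)
    next
      case False
      have "U (Suc n) = U n \<union> (?C (ks ! n) - U n)"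
        by (auto simp: U_def lessThan_Suc)
      also have "card \<dots> = card (U n) + card (?C (ks ! n) - U n)"
        using fin_U[of n] fin[OF \<open>ks ! n \<in> S\<close>] Suc.prems(2) by (intro card_Un_disjoint) auto
      finally have "card (U (Suc n)) = card (U n) + card (?C (ks ! n) - U n)" .
      moreover have "1 < card (?C (ks ! n) - U n)"
        using new[of n] False Suc.prems(2) by (simp add: U_def)
      ultimately show ?thesis
        using Suc.IH False Suc.prems(2) by simp
    qed
  qed simp
  moreover have "U (length ks) = (\<Union>e\<in>S. ?C e)"
    unfolding U_def ks(2)[symmetric] by (auto simp: in_set_conv_nth) (metis nth_mem)
  moreover have "length ks = card S"
    using ks distinct_card by fastforce
  moreover have "1 \<le> length ks"
    using assms(2) ks(2) by (cases ks) auto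
  ultimately show ?thesis
    by (metis order_refl)
qed

definition walk_gain :: "('a \<Rightarrow> 'a \<Rightarrow> complex) \<Rightarrow> 'a list \<Rightarrow> complex" where
  "walk_gain \<phi> p = (\<Prod>i<length p - 1. \<phi> (p ! i) (p ! (i + 1)))"

lemma walk_gain_singleton [simp]: "walk_gain \<phi> [x] = 1"
  by (simp add: walk_gain_def)

lemma walk_gain_Cons_Cons [simp]: "walk_gain \<phi> (x # y # q) = \<phi> x y * walk_gain \<phi> (y # q)"
  unfolding walk_gain_def by (simp add: prod.lessThan_Suc_shift del: prod.lessThan_Suc)

lemma fund_cycle_gain_eq:
  assumes ac: "acyclic_edges F" and le: "tree_le F r x y" and not_le: "\<not> tree_le F r y x"
    and p: "is_path F p" "hd p = x" "last p = y"
  shows "fund_cycle_gain F r \<phi> {x, y} = walk_gain \<phi> p * \<phi> y x"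
  unfolding fund_cycle_gain_def walk_gain_def[symmetric]
proof (rule the_equality)
  fix g
  assume "\<exists>x' y' p'. {x, y} = {x', y'} \<and> tree_le F r x' y' \<and> is_path F p' \<and> hd p' = x'
            \<and> last p' = y' \<and> g = walk_gain \<phi> p' * \<phi> y' x'"
  then obtain x' y' p' where g: "{x, y} = {x', y'}" "tree_le F r x' y'" "is_path F p'"
      "hd p' = x'" "last p' = y'" "g = walk_gain \<phi> p' * \<phi> y' x'"
    by blast
  then have "x' = x" "y' = y"
    using not_le by (auto simp: doubleton_eq_iff)
  moreover have "p' = p"
    using acyclic_path_unique[OF ac g(3) p(1)] g(4,5) p(2,3) calculation by simp
  ultimately show "g = walk_gain \<phi> p * \<phi> y x"
    using g(6) by simp
qed (use le p in blast)

lemma T_gain_cis: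
  assumes "\<And>s t. \<theta> t s = - \<theta> s t"
  shows "T_gain E (\<lambda>s t. cis (\<theta> s t))"
  unfolding T_gain_def by (metis assms cis_inverse norm_cis)

lemma re_nonneg_cis:
  "(\<And>s t. 0 \<le> cos (\<theta> s t)) \<Longrightarrow> re_nonneg V E (\<lambda>s t. cis (\<theta> s t))"
  by (simp add: re_nonneg_def gain_matrix_def)

section \<open>Quarter turns\<close>

lemma cos_nonneg_near_2pi_multiple:
  assumes "- (pi / 2) \<le> y - of_int m * (2 * pi)" "y - of_int m * (2 * pi) \<le> pi / 2"
  shows "0 \<le> cos y"
proof -
  have "cos (y - of_int m * (2 * pi))
      = cos y * cos ((2 * pi) * of_int m) + sin y * sin ((2 * pi) * of_int m)"
    by (simp add: cos_diff mult.commute)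
  then have "cos y = cos (y - of_int m * (2 * pi))"
    by simp
  also have "0 \<le> \<dots>"
    using assms by (rule cos_ge_zero)
  finally show ?thesis .
qed

(* (q - s) mod 4 \<in> {0, 3}: turning the quadrant q back by s quarter turns lands in
   [-pi/2, pi/2] modulo 2 pi. *)
lemma cos_nonneg_shifted_quadrant:
  assumes x: "of_int q * (pi / 2) \<le> x" "x \<le> (of_int q + 1) * (pi / 2)"
    and s: "(q - s) mod 4 \<in> {0, 3}"
  shows "0 \<le> cos (x - of_int s * (pi / 2))"
proof -
  define n where "n = (q - s) div 4 + (if (q - s) mod 4 = 0 then 0 else 1)"
  have "q - s = 4 * ((q - s) div 4) + (q - s) mod 4"
    by simp
  then have "q - s - 4 * n \<in> {0, -1}"
    using s unfolding n_def by (elim insertE emptyE) simp_all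
  then have "of_int (q - s - 4 * n) * (pi / 2) \<in> {0, - (pi / 2)}"
    by (elim insertE emptyE) (simp_all del: of_int_diff of_int_mult)
  moreover have "of_int (q - s - 4 * n) * (pi / 2)
      = of_int q * (pi / 2) - of_int s * (pi / 2) - of_int n * (2 * pi)"
    by (simp add: algebra_simps)
  moreover have "(of_int q + 1) * (pi / 2) = of_int q * (pi / 2) + pi / 2"
    by (simp add: distrib_right)
  ultimately show ?thesis
    using x by (intro cos_nonneg_near_2pi_multiple[of _ n]) auto
qed

lemma quadrant_exists:
  assumes "0 \<le> c" "c < 2 * pi"
  obtains q :: int where "q \<in> {0, 1, 2, 3}" "of_int q * (pi / 2) \<le> c" "c \<le> (of_int q + 1) * (pi / 2)"
proof
  define q where "q = \<lfloor>c / (pi / 2)\<rfloor>"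
  have "of_int q \<le> c / (pi / 2)" "c / (pi / 2) < of_int q + 1"
    unfolding q_def by linarith+
  then show lo: "of_int q * (pi / 2) \<le> c" and hi: "c \<le> (of_int q + 1) * (pi / 2)"
    by (simp_all add: field_simps)
  have "0 < (of_int q + 1) * (pi / 2)"
    using assms(1) \<open>c / (pi / 2) < of_int q + 1\<close> by (simp add: field_simps)
  then have "0 \<le> q"
    by (simp add: zero_less_mult_iff)
  have "of_int q * (pi / 2) < 4 * (pi / 2)"
    using lo assms(2) by linarith
  then have "q < 4"
    by (simp add: mult_less_cancel_right)
  with \<open>0 \<le> q\<close> show "q \<in> {0, 1, 2, 3}"
    by auto
qed

lemma quarter_turn_sums_exist:
  "\<forall>q1\<in>{0, 1, 2, 3::int}. \<forall>q2\<in>{0, 1, 2, 3::int}. \<forall>q3\<in>{0, 1, 2, 3::int}.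
     \<exists>k1\<in>{-1, 0, 1::int}. \<exists>k2\<in>{-1, 0, 1::int}. \<exists>k3\<in>{-1, 0, 1::int}.
       (q1 - (k1 + k2)) mod 4 \<in> {0, 3} \<and> (q2 - (k2 + k3)) mod 4 \<in> {0, 3}
       \<and> (q3 - (k1 + k2 + k3)) mod 4 \<in> {0, 3}"
  by simp

lemma quarter_turns_exist:
  assumes "0 \<le> x1" "x1 < 2 * pi" "0 \<le> x2" "x2 < 2 * pi" "0 \<le> x3" "x3 < 2 * pi"
  obtains k1 k2 k3 :: int where "k1 \<in> {-1, 0, 1}" "k2 \<in> {-1, 0, 1}" "k3 \<in> {-1, 0, 1}"
    "0 \<le> cos (x1 - of_int (k1 + k2) * (pi / 2))" "0 \<le> cos (x2 - of_int (k2 + k3) * (pi / 2))"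
    "0 \<le> cos (x3 - of_int (k1 + k2 + k3) * (pi / 2))"
proof -
  obtain q1 where q1: "q1 \<in> {0, 1, 2, 3}" "of_int q1 * (pi / 2) \<le> x1" "x1 \<le> (of_int q1 + 1) * (pi / 2)"
    by (rule quadrant_exists[OF assms(1,2)])
  obtain q2 where q2: "q2 \<in> {0, 1, 2, 3}" "of_int q2 * (pi / 2) \<le> x2" "x2 \<le> (of_int q2 + 1) * (pi / 2)"
    by (rule quadrant_exists[OF assms(3,4)])
  obtain q3 where q3: "q3 \<in> {0, 1, 2, 3}" "of_int q3 * (pi / 2) \<le> x3" "x3 \<le> (of_int q3 + 1) * (pi / 2)"
    by (rule quadrant_exists[OF assms(5,6)])
  obtain k1 k2 k3 where k: "k1 \<in> {-1, 0, 1}" "k2 \<in> {-1, 0, 1}" "k3 \<in> {-1, 0, 1}"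
    "(q1 - (k1 + k2)) mod 4 \<in> {0, 3}" "(q2 - (k2 + k3)) mod 4 \<in> {0, 3}"
    "(q3 - (k1 + k2 + k3)) mod 4 \<in> {0, 3}"
    using quarter_turn_sums_exist[THEN bspec, OF q1(1), THEN bspec, OF q2(1), THEN bspec, OF q3(1)]
    by (elim bexE conjE) (simp only:)
  show ?thesis
    by (rule that[OF k(1-3) cos_nonneg_shifted_quadrant[OF q1(2,3) k(4)]
          cos_nonneg_shifted_quadrant[OF q2(2,3) k(5)] cos_nonneg_shifted_quadrant[OF q3(2,3) k(6)]])
qed

lemma path4_angles_exist:
  fixes a b c d :: 'a
  assumes "distinct [a, b, c, d]"
    and "0 \<le> x1" "x1 < 2 * pi" "0 \<le> x2" "x2 < 2 * pi" "0 \<le> x3" "x3 < 2 * pi"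
  obtains \<theta> :: "'a \<Rightarrow> 'a \<Rightarrow> real" where
    "\<And>s t. \<theta> t s = - \<theta> s t" "\<And>s t. 0 \<le> cos (\<theta> s t)"
    "\<theta> a b + \<theta> b c + \<theta> c a = x1" "\<theta> b c + \<theta> c d + \<theta> d b = x2"
    "\<theta> a b + \<theta> b c + \<theta> c d + \<theta> d a = x3"
proof -
  obtain k1 k2 k3 :: int where k: "k1 \<in> {-1, 0, 1}" "k2 \<in> {-1, 0, 1}" "k3 \<in> {-1, 0, 1}"
    and cos_k: "0 \<le> cos (x1 - of_int (k1 + k2) * (pi / 2))" "0 \<le> cos (x2 - of_int (k2 + k3) * (pi / 2))"
      "0 \<le> cos (x3 - of_int (k1 + k2 + k3) * (pi / 2))"
    by (rule quarter_turns_exist[OF assms(2-7)])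
  define \<alpha> \<beta> \<gamma> where "\<alpha> = of_int k1 * (pi / 2)" and "\<beta> = of_int k2 * (pi / 2)"
    and "\<gamma> = of_int k3 * (pi / 2)"
  have "x1 - \<alpha> - \<beta> = x1 - of_int (k1 + k2) * (pi / 2)"
    "x2 - \<beta> - \<gamma> = x2 - of_int (k2 + k3) * (pi / 2)"
    "x3 - \<alpha> - \<beta> - \<gamma> = x3 - of_int (k1 + k2 + k3) * (pi / 2)"
    by (simp_all add: \<alpha>_def \<beta>_def \<gamma>_def algebra_simps)
  then have cos_forced: "0 \<le> cos (x1 - \<alpha> - \<beta>)" "0 \<le> cos (x2 - \<beta> - \<gamma>)"
    "0 \<le> cos (x3 - \<alpha> - \<beta> - \<gamma>)"
    using cos_k by (simp_all only:)
  have cos_quarter: "0 \<le> cos \<alpha>" "0 \<le> cos \<beta>" "0 \<le> cos \<gamma>"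
    using k by (auto simp: \<alpha>_def \<beta>_def \<gamma>_def)
  \<comment> \<open>each edge gets its angle in one orientation only, so that \<open>ang s t - ang t s\<close>
    is antisymmetric by construction\<close>
  define ang :: "'a \<Rightarrow> 'a \<Rightarrow> real" where
    "ang s t = (if (s, t) = (a, b) then \<alpha> else if (s, t) = (b, c) then \<beta>
      else if (s, t) = (c, d) then \<gamma> else if (s, t) = (c, a) then x1 - \<alpha> - \<beta>
      else if (s, t) = (d, b) then x2 - \<beta> - \<gamma>
      else if (s, t) = (d, a) then x3 - \<alpha> - \<beta> - \<gamma>
      else 0)" for s t
  have cos_ang: "0 \<le> cos (ang s t)" for s t
    using cos_forced cos_quarter by (simp add: ang_def)
  have "ang s t = 0 \<or> ang t s = 0" for s t
    using assms(1) by (auto simp: ang_def)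
  then have "0 \<le> cos (ang s t - ang t s)" for s t
    using cos_ang[of s t] cos_ang[of t s] by (metis cos_minus diff_0 diff_zero)
  moreover have "ang a b = \<alpha>" "ang b c = \<beta>" "ang c d = \<gamma>" "ang c a = x1 - \<alpha> - \<beta>"
    "ang d b = x2 - \<beta> - \<gamma>" "ang d a = x3 - \<alpha> - \<beta> - \<gamma>"
    "ang b a = 0" "ang c b = 0" "ang d c = 0" "ang a c = 0" "ang b d = 0" "ang a d = 0"
    using assms(1) by (auto simp: ang_def)
  ultimately show ?thesis
    by (intro that[of "\<lambda>s t. ang s t - ang t s"]) simp_all
qed

section \<open>The complete graph on four vertices\<close>

lemma path4_fund_cycle_gains:
  assumes dist: "distinct [a, b, c, d]"
  defines "T \<equiv> path_edges [a, b, c, d]"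
  shows "fund_cycle_gain T a \<phi> {a, c} = \<phi> a b * \<phi> b c * \<phi> c a"
    "fund_cycle_gain T a \<phi> {b, d} = \<phi> b c * \<phi> c d * \<phi> d b"
    "fund_cycle_gain T a \<phi> {a, d} = \<phi> a b * \<phi> b c * \<phi> c d * \<phi> d a"
proof -
  have ac: "acyclic_edges T"
    unfolding T_def using dist by (rule acyclic_path_edges)
  have le: "tree_le T a ([a, b, c, d] ! i) ([a, b, c, d] ! j) \<longleftrightarrow> i \<le> j"
    if "i < 4" "j < 4" for i j
    using tree_le_path_edges_iff[OF dist] that by (simp add: T_def)
  have order: "tree_le T a a c" "\<not> tree_le T a c a" "tree_le T a b d" "\<not> tree_le T a d b"
    "tree_le T a a d" "\<not> tree_le T a d a"
    using le[of 0 2] le[of 2 0] le[of 1 3] le[of 3 1] le[of 0 3] le[of 3 0] by simp_all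
  have paths: "is_path T [a, b, c]" "is_path T [b, c, d]" "is_path T [a, b, c, d]"
    using dist by (simp_all add: T_def)
  show "fund_cycle_gain T a \<phi> {a, c} = \<phi> a b * \<phi> b c * \<phi> c a"
    "fund_cycle_gain T a \<phi> {b, d} = \<phi> b c * \<phi> c d * \<phi> d b"
    "fund_cycle_gain T a \<phi> {a, d} = \<phi> a b * \<phi> b c * \<phi> c d * \<phi> d a"
    using fund_cycle_gain_eq[OF ac order(1,2) paths(1)] fund_cycle_gain_eq[OF ac order(3,4) paths(2)]
      fund_cycle_gain_eq[OF ac order(5,6) paths(3)]
    by (simp_all add: mult.assoc)
qed

lemma path4_non_tree_edges:
  assumes "distinct [a, b, c, d]"
  shows "complete_edges {a, b, c, d} - path_edges [a, b, c, d] = {{a, c}, {a, d}, {b, d}}"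
proof -
  have "a \<noteq> b" "a \<noteq> c" "a \<noteq> d" "b \<noteq> c" "b \<noteq> d" "c \<noteq> d"
    using assms by auto
  then show ?thesis
    by (simp add: complete_edges_four[OF assms] insert_Diff_if doubleton_eq_iff)
qed

lemma GNRP_wrt_path4:
  assumes dist: "distinct [a, b, c, d]"
  shows "GNRP_wrt {a, b, c, d} (complete_edges {a, b, c, d}) (path_edges [a, b, c, d]) a"
  unfolding GNRP_wrt_def path4_non_tree_edges[OF dist]
proof (intro allI impI)
  fix x :: "'a set \<Rightarrow> real"
  assume "\<forall>e\<in>{{a, c}, {a, d}, {b, d}}. 0 \<le> x e \<and> x e < 2 * pi"
  then have ranges: "0 \<le> x {a, c}" "x {a, c} < 2 * pi" "0 \<le> x {b, d}" "x {b, d} < 2 * pi"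
    "0 \<le> x {a, d}" "x {a, d} < 2 * pi"
    by simp_all
  obtain \<theta> where \<theta>: "\<And>s t. \<theta> t s = - \<theta> s t" "\<And>s t. 0 \<le> cos (\<theta> s t)"
    "\<theta> a b + \<theta> b c + \<theta> c a = x {a, c}" "\<theta> b c + \<theta> c d + \<theta> d b = x {b, d}"
    "\<theta> a b + \<theta> b c + \<theta> c d + \<theta> d a = x {a, d}"
    using path4_angles_exist[OF dist ranges] by blast
  let ?\<phi> = "\<lambda>s t. cis (\<theta> s t)"
  show "\<exists>\<phi>. T_gain (complete_edges {a, b, c, d}) \<phi> \<and>
      (\<forall>e\<in>{{a, c}, {a, d}, {b, d}}.
        fund_cycle_gain (path_edges [a, b, c, d]) a \<phi> e = exp (\<i> * complex_of_real (x e))) \<and>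
      re_nonneg {a, b, c, d} (complete_edges {a, b, c, d}) \<phi>"
  proof (intro exI[of _ ?\<phi>] conjI)
    show "T_gain (complete_edges {a, b, c, d}) ?\<phi>"
      using \<theta>(1) by (rule T_gain_cis)
    show "re_nonneg {a, b, c, d} (complete_edges {a, b, c, d}) ?\<phi>"
      using \<theta>(2) by (rule re_nonneg_cis)
    show "\<forall>e\<in>{{a, c}, {a, d}, {b, d}}.
        fund_cycle_gain (path_edges [a, b, c, d]) a ?\<phi> e = exp (\<i> * complex_of_real (x e))"
      using \<theta>(3-5) path4_fund_cycle_gains[OF dist, of ?\<phi>]
      by (simp add: cis_mult cis_conv_exp[symmetric])
  qed
qed

lemma K4_path_fund_cycles:
  assumes T: "T = path_edges [0, 1, 2, 3 :: nat]"
  shows "fund_cycle T {0, 2} = {{0, 2}, {0, 1}, {1, 2}}"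
    "fund_cycle T {1, 3} = {{1, 3}, {1, 2}, {2, 3}}"
    "fund_cycle T {0, 3} = {{0, 3}, {0, 1}, {1, 2}, {2, 3}}"
proof -
  have ac: "acyclic_edges T"
    unfolding T by (rule acyclic_path_edges) simp
  show "fund_cycle T {0, 2} = {{0, 2}, {0, 1}, {1, 2}}"
    "fund_cycle T {1, 3} = {{1, 3}, {1, 2}, {2, 3}}"
    "fund_cycle T {0, 3} = {{0, 3}, {0, 1}, {1, 2}, {2, 3}}"
    using fund_cycle_eq[OF ac, of "[0, 1, 2]"] fund_cycle_eq[OF ac, of "[1, 2, 3]"]
      fund_cycle_eq[OF ac, of "[0, 1, 2, 3]"]
    by (simp_all add: T)
qed

lemma K4_not_has_DEP: "\<not> has_DEP K4_V (complete_edges K4_V)"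
proof
  assume DEP: "has_DEP K4_V (complete_edges K4_V)"
  define T where "T = path_edges [0, 1, 2, 3 :: nat]"
  define S where "S = {{0, 2}, {0, 3}, {1, 3 :: nat}}"
  have V: "K4_V = set [0, 1, 2, 3]"
    by (simp add: K4_V_def)
  have nst: "normal_spanning_tree K4_V (complete_edges K4_V) T 0"
    unfolding V T_def using normal_spanning_tree_path_edges[of "[0, 1, 2, 3 :: nat]"] by simp
  have cycles: "fund_cycle T {0, 2} = {{0, 2}, {0, 1}, {1, 2}}"
    "fund_cycle T {1, 3} = {{1, 3}, {1, 2}, {2, 3}}"
    "fund_cycle T {0, 3} = {{0, 3}, {0, 1}, {1, 2}, {2, 3}}"
    using T_def by (rule K4_path_fund_cycles)+
  have E: "complete_edges K4_V = {{0, 1}, {0, 2}, {0, 3}, {1, 2}, {1, 3}, {2, 3}}"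
    unfolding K4_V_def by (rule complete_edges_four) simp
  have non_tree: "complete_edges K4_V - T = S"
    by (simp add: E T_def S_def insert_Diff_if doubleton_eq_iff)
  have "T \<subseteq> (\<Union>e\<in>complete_edges K4_V - T. fund_cycle T e)"
    by (simp only: non_tree S_def UN_insert UN_empty cycles) (simp add: T_def)
  moreover have "is_subtree T"
    unfolding T_def by (rule is_subtree_path_edges) simp_all
  ultimately have "fundamental_collection (complete_edges K4_V) T S"
    using fundamental_collection_non_tree_edges non_tree by metis
  then have "DEP_collection T S"
    using DEP nst unfolding has_DEP_def by blast
  moreover have "finite (fund_cycle T e) \<and> 3 \<le> card (fund_cycle T e)" if "e \<in> S" for e
    using that unfolding S_def
    by (elim insertE emptyE; hypsubst; simp only: cycles; simp add: doubleton_eq_iff)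
  ultimately have "3 + 2 * (card S - 1) \<le> card (\<Union>e\<in>S. fund_cycle T e)"
    by (intro DEP_collection_card_Union) (auto simp: S_def)
  moreover have "(\<Union>e\<in>S. fund_cycle T e) \<subseteq> complete_edges K4_V"
    by (simp only: S_def UN_insert UN_empty cycles) (simp add: E)
  then have "card (\<Union>e\<in>S. fund_cycle T e) \<le> card (complete_edges K4_V)"
    by (rule card_mono[rotated]) (simp add: E)
  moreover have "card (complete_edges K4_V) = 6" "card S = 3"
    by (simp_all add: E S_def doubleton_eq_iff)
  ultimately show False
    by simp
qed

lemma K4_has_GNRP: "has_GNRP K4_V (complete_edges K4_V)"
  unfolding has_GNRP_def
proof (intro conjI allI impI)
  show "simple_graph K4_V (complete_edges K4_V)"
    by (rule simple_graph_complete_edges) (simp add: K4_V_def)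
  show "connected_on K4_V (complete_edges K4_V)"
    by (rule connected_on_complete_edges) (simp add: K4_V_def)
  fix ET r assume nst: "normal_spanning_tree K4_V (complete_edges K4_V) ET r"
  have "finite K4_V"
    by (simp add: K4_V_def)
  then obtain p where p: "distinct p" "hd p = r" "set p = K4_V" "ET = path_edges p"
    by (rule normal_spanning_tree_complete_edges[OF nst])
  have "length p = 4"
    using distinct_card[OF p(1)] p(3) by (simp add: K4_V_def)
  then obtain b c d where "p = [r, b, c, d]"
    using p(2) by (auto simp: length_Suc_conv numeral_eq_Suc)
  then have dist: "distinct [r, b, c, d]" and V: "K4_V = {r, b, c, d}"
    and ET: "ET = path_edges [r, b, c, d]"
    using p by auto
  show "GNRP_wrt K4_V (complete_edges K4_V) ET r"
    unfolding V ET using dist by (rule GNRP_wrt_path4)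
qed

theorem theorem4p3:
  shows "\<not> has_DEP K4_V (complete_edges K4_V) \<and> has_GNRP K4_V (complete_edges K4_V)"
  using K4_not_has_DEP K4_has_GNRP by blast

end
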